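(* Let $G$ be a simple graph with $n$ vertices, let $G'$ be obtained from $G$ by a symmetric $\mathcal K_{xy}$-operation, and let $f:\mathbb R^n\to\mathbb R$ be a convex symmetric function. Then $f[G]\le f[G']$. In particular $\sum_{v\in V(G)}d(v,G)^s\le\sum_{v\in V(G')}d(v,G')^s$ for every positive integer $s$.
   Context: $d(v,G)$ is the degree of $v$ in $G$, and $f[G]=f(d(v_1,G),\dots,d(v_n,G))$ for any ordering $v_1,\dots,v_n$ of $V(G)$. A function $f:\mathbb R^n\to\mathbb R$ is symmetric if it is invariant under permuting coordinates; a symmetric $f$ is called convex if for all $x\in\mathbb R^n$ with nonnegative coordinates, all indices $r\ne s$ with $x_r\ge x_s$, and all $\varepsilon\ge0$, one has $f(x+\varepsilon e_r)\ge f(x+\varepsilon e_s)$ ($e_i$ the standard unit vectors). $\mathcal K_{xy}$-operation: let $G$ be a simple graph, $x\ne y$ vertices, $\mathcal K$ an induced subgraph of $G$ containing $x$ and $y$, and $N(v)$ the neighbourhood of $v$. Put $X=N(x)\setminus(V(\mathcal K)\cup N(y))$, $Y=N(y)\setminus(V(\mathcal K)\cup N(x))$, $[x,X]=\{xv:v\in X\}$, $[y,X]=\{yv:v\in X\}$, $[y,Y]=\{yv:v\in Y\}$. The graph $\mathcal K_{xy}(G)=(G-[x,X])\cup[y,X]$ (on the same vertex set) is obtained from $G$ by the $\mathcal K_{xy}$-operation. The operation is called symmetric if the graph $G-([x,X]\cup[y,Y])$ has an automorphism $\alpha$ with $\alpha(x)=y$, $\alpha(y)=x$, $\alpha(V(\mathcal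 K))=V(\mathcal K)$, and $\alpha(v)=v$ for every $v\in X\cup Y$. *)

theory Defs
  imports "HOL-Analysis.Analysis"
begin

definition simple_graph :: "('a \<Rightarrow> 'a \<Rightarrow> bool) \<Rightarrow> bool" where
  "simple_graph E \<longleftrightarrow> (\<forall>u v. E u v \<longrightarrow> E v u) \<and> (\<forall>v. \<not> E v v)"

definition nbhd :: "('a \<Rightarrow> 'a \<Rightarrow> bool) \<Rightarrow> 'a \<Rightarrow> 'a set" where
  "nbhd E v = {u. E v u}"

definition deg :: "('a \<Rightarrow> 'a \<Rightarrow> bool) \<Rightarrow> 'a \<Rightarrow> nat" where
  "deg E v = card (nbhd E v)"

text \<open>Degree vector, indexed by the vertices (ordering = the index type itself).\<close>
definition degvec :: "('n::finite \<Rightarrow> 'n \<Rightarrow> bool) \<Rightarrow> real ^ 'n" where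
  "degvec E = (\<chi> v. real (deg E v))"

text \<open>Edge set [z,S] = {zv : v in S}, as a set of 2-element vertex sets.\<close>
definition star_edges :: "'a \<Rightarrow> 'a set \<Rightarrow> 'a set set" where
  "star_edges z S = {{z, w} | w. w \<in> S}"

definition remove_edges :: "('a \<Rightarrow> 'a \<Rightarrow> bool) \<Rightarrow> 'a set set \<Rightarrow> 'a \<Rightarrow> 'a \<Rightarrow> bool" where
  "remove_edges E F = (\<lambda>u v. E u v \<and> {u, v} \<notin> F)"

definition add_edges :: "('a \<Rightarrow> 'a \<Rightarrow> bool) \<Rightarrow> 'a set set \<Rightarrow> 'a \<Rightarrow> 'a \<Rightarrow> bool" where
  "add_edges E F = (\<lambda>u v. E u v \<or> (u \<noteq> v \<and> {u, v} \<in> F))"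

definition Kxy_X :: "('a \<Rightarrow> 'a \<Rightarrow> bool) \<Rightarrow> 'a set \<Rightarrow> 'a \<Rightarrow> 'a \<Rightarrow> 'a set" where
  "Kxy_X E K x y = nbhd E x - (K \<union> nbhd E y)"

text \<open>The K_xy-operation; the induced subgraph K is given by its vertex set.\<close>
definition Kxy_op :: "('a \<Rightarrow> 'a \<Rightarrow> bool) \<Rightarrow> 'a set \<Rightarrow> 'a \<Rightarrow> 'a \<Rightarrow> 'a \<Rightarrow> 'a \<Rightarrow> bool" where
  "Kxy_op E K x y =
     add_edges (remove_edges E (star_edges x (Kxy_X E K x y))) (star_edges y (Kxy_X E K x y))"

definition graph_automorphism :: "('a \<Rightarrow> 'a \<Rightarrow> bool) \<Rightarrow> ('a \<Rightarrow> 'a) \<Rightarrow> bool" where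
  "graph_automorphism E \<alpha> \<longleftrightarrow> bij \<alpha> \<and> (\<forall>u v. E u v \<longleftrightarrow> E (\<alpha> u) (\<alpha> v))"

definition symmetric_Kxy :: "('a \<Rightarrow> 'a \<Rightarrow> bool) \<Rightarrow> 'a set \<Rightarrow> 'a \<Rightarrow> 'a \<Rightarrow> bool" where
  "symmetric_Kxy E K x y \<longleftrightarrow>
     (let X = Kxy_X E K x y; Y = Kxy_X E K y x in
      \<exists>\<alpha>. graph_automorphism (remove_edges E (star_edges x X \<union> star_edges y Y)) \<alpha>
          \<and> \<alpha> x = y \<and> \<alpha> y = x \<and> \<alpha> ` K = K \<and> (\<forall>v \<in> X \<union> Y. \<alpha> v = v))"

text \<open>Symmetric functions R^n -> R (n = CARD('n)).\<close>
definition symmetric_fun :: "(real ^ 'n::finite \<Rightarrow> real) \<Rightarrow> bool" where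
  "symmetric_fun f \<longleftrightarrow> (\<forall>p x. bij p \<longrightarrow> f (\<chi> i. x $ p i) = f x)"

definition convex_sym :: "(real ^ 'n::finite \<Rightarrow> real) \<Rightarrow> bool" where
  "convex_sym f \<longleftrightarrow> (\<forall>x r s \<epsilon>. (\<forall>i. 0 \<le> x $ i) \<longrightarrow> r \<noteq> s \<longrightarrow> x $ s \<le> x $ r \<longrightarrow> 0 \<le> \<epsilon> \<longrightarrow>
       f (x + \<epsilon> *\<^sub>R axis r 1) \<ge> f (x + \<epsilon> *\<^sub>R axis s 1))"

end

theory Submission
  imports Defs
begin

(* Write X = N(x) - (K u N(y)), Y = N(y) - (K u N(x)), a = |X|, b = |Y|.
   The K_xy-operation moves the a edges from x to X over to y and leaves every other
   degree unchanged.  Removing the edges [x,X] and [y,Y] gives a graph H with an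
   automorphism swapping x and y, so x and y have a common degree d in H; hence
   d(x,G) = d + a, d(y,G) = d + b, d(x,G') = d, d(y,G') = d + b + a.  In other words,
   with the base vector z (z_x = d, otherwise the degrees of G) we have
   deg(G) = z + a e_x and deg(G') = z + a e_y with z_y >= z_x, which is exactly the
   situation in the definition of a convex symmetric function.  The power sums
   sum_i t_i^s are convex in this sense, because t |-> (t + a)^s - t^s is monotone
   for t >= 0; so the degree power-sum inequality is a special case. *)

lemma power_increment_mono:
  fixes t1 t2 A :: real
  assumes "0 \<le> t1" "t1 \<le> t2" "0 \<le> A"
  shows "(t1 + A) ^ s - t1 ^ s \<le> (t2 + A) ^ s - t2 ^ s"
proof (induction s)
  case 0
  then show ?case by simp
next
  case (Suc s)
  have step: "\<And>t. (t + A) ^ Suc s - t ^ Suc s = (t + A) * ((t + A) ^ s - t ^ s) + A * t ^ s"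
    by (simp add: algebra_simps)
  have "0 \<le> (t1 + A) ^ s - t1 ^ s"
    using assms by (simp add: power_mono)
  then have "(t1 + A) * ((t1 + A) ^ s - t1 ^ s) \<le> (t2 + A) * ((t2 + A) ^ s - t2 ^ s)"
    using Suc.IH assms by (intro mult_mono) auto
  moreover have "A * t1 ^ s \<le> A * t2 ^ s"
    using assms by (intro mult_left_mono power_mono) auto
  ultimately show ?case
    unfolding step by linarith
qed

lemma power_sum_add_axis:
  fixes z :: "real ^ 'n::finite"
  shows "(\<Sum>i\<in>UNIV. ((z + \<epsilon> *\<^sub>R axis r 1) $ i) ^ s)
           = (\<Sum>i\<in>UNIV. (z $ i) ^ s) + ((z $ r + \<epsilon>) ^ s - (z $ r) ^ s)"
proof -
  have same: "(\<Sum>i\<in>UNIV - {r}. ((z + \<epsilon> *\<^sub>R axis r 1) $ i) ^ s) = (\<Sum>i\<in>UNIV - {r}. (z $ i) ^ s)"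
    by (intro sum.cong) (auto simp: axis_def)
  show ?thesis
    using same by (simp add: sum.remove[of UNIV r] axis_def)
qed

lemma convex_sym_power_sum: "convex_sym (\<lambda>z :: real ^ 'n::finite. \<Sum>i\<in>UNIV. (z $ i) ^ s)"
  unfolding convex_sym_def power_sum_add_axis
  using power_increment_mono by fastforce

lemma Kxy_op_adj:
  assumes "simple_graph E" and "x \<noteq> y" and "x \<in> K" and "y \<in> K"
  defines "X \<equiv> Kxy_X E K x y"
  shows "Kxy_op E K x y u v \<longleftrightarrow>
           (E u v \<and> \<not> (u = x \<and> v \<in> X) \<and> \<not> (v = x \<and> u \<in> X))
           \<or> (u \<noteq> v \<and> ((u = y \<and> v \<in> X) \<or> (v = y \<and> u \<in> X)))"
  using assms unfolding Kxy_op_def add_edges_def remove_edges_def star_edges_def X_def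
    Kxy_X_def simple_graph_def
  by (auto simp: doubleton_eq_iff nbhd_def)

lemma Kxy_op_deg:
  fixes E :: "'n::finite \<Rightarrow> 'n \<Rightarrow> bool"
  assumes G: "simple_graph E" and xy: "x \<noteq> y" "x \<in> K" "y \<in> K"
  defines "X \<equiv> Kxy_X E K x y" and "G' \<equiv> Kxy_op E K x y"
  shows "card X \<le> deg E x"
    and "deg G' x = deg E x - card X"
    and "deg G' y = deg E y + card X"
    and "v \<noteq> x \<Longrightarrow> v \<noteq> y \<Longrightarrow> deg G' v = deg E v"
proof -
  have adj: "G' u v \<longleftrightarrow> (E u v \<and> \<not> (u = x \<and> v \<in> X) \<and> \<not> (v = x \<and> u \<in> X))
               \<or> (u \<noteq> v \<and> ((u = y \<and> v \<in> X) \<or> (v = y \<and> u \<in> X)))" for u v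
    unfolding G'_def X_def using Kxy_op_adj[OF G xy] .
  have sym: "E u v \<Longrightarrow> E v u" for u v
    using G unfolding simple_graph_def by blast
  have X: "X = nbhd E x - (K \<union> nbhd E y)"
    unfolding X_def Kxy_X_def ..
  then have XN: "X \<subseteq> nbhd E x" and xyX: "x \<notin> X" "y \<notin> X"
    using xy by auto
  show "card X \<le> deg E x"
    unfolding deg_def using XN by (simp add: card_mono)
  have "nbhd G' x = nbhd E x - X"
    unfolding nbhd_def using adj xyX xy by auto
  then show "deg G' x = deg E x - card X"
    unfolding deg_def using XN by (simp add: card_Diff_subset)
  have "nbhd G' y = nbhd E y \<union> X" and "nbhd E y \<inter> X = {}"
    unfolding nbhd_def using adj xyX xy X by (auto simp: nbhd_def)
  then show "deg G' y = deg E y + card X"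
    unfolding deg_def by (simp add: card_Un_disjoint)
  assume v: "v \<noteq> x" "v \<noteq> y"
  show "deg G' v = deg E v"
  proof (cases "v \<in> X")
    case True
    then have "x \<in> nbhd E v" and "y \<notin> nbhd E v"
      using X sym by (auto simp: nbhd_def)
    moreover have "nbhd G' v = insert y (nbhd E v - {x})"
      unfolding nbhd_def using adj v True xy by auto
    ultimately show ?thesis
      unfolding deg_def by (simp add: card_Suc_Diff1 del: card_Diff_insert card_Diff_singleton)
  next
    case False
    then have "nbhd G' v = nbhd E v"
      unfolding nbhd_def using adj v xy by auto
    then show ?thesis
      unfolding deg_def by simp
  qed
qed

lemma automorphism_deg:
  fixes H :: "'a \<Rightarrow> 'a \<Rightarrow> bool"
  assumes "graph_automorphism H \<alpha>"
  shows "deg H (\<alpha> v) = deg H v"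
proof -
  have bij: "bij \<alpha>" and hom: "\<And>u w. H u w \<longleftrightarrow> H (\<alpha> u) (\<alpha> w)"
    using assms unfolding graph_automorphism_def by auto
  have "nbhd H (\<alpha> v) = \<alpha> ` nbhd H v"
  proof
    show "\<alpha> ` nbhd H v \<subseteq> nbhd H (\<alpha> v)"
      using hom by (auto simp: nbhd_def)
    show "nbhd H (\<alpha> v) \<subseteq> \<alpha> ` nbhd H v"
    proof
      fix u
      assume u: "u \<in> nbhd H (\<alpha> v)"
      obtain w where "u = \<alpha> w"
        using bij by (metis bij_pointE)
      then show "u \<in> \<alpha> ` nbhd H v"
        using u hom by (auto simp: nbhd_def)
    qed
  qed
  then show ?thesis
    unfolding deg_def using bij by (simp add: card_image inj_on_subset[OF bij_is_inj])
qed

text \<open>In a symmetric K_xy-operation, x and y have the same degree once the edges to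
  X resp. Y are removed: d(x) - |X| = d(y) - |Y|.\<close>
lemma symmetric_Kxy_deg:
  fixes E :: "'n::finite \<Rightarrow> 'n \<Rightarrow> bool"
  assumes G: "simple_graph E" and xy: "x \<noteq> y" "x \<in> K" "y \<in> K"
    and symm: "symmetric_Kxy E K x y"
  defines "X \<equiv> Kxy_X E K x y" and "Y \<equiv> Kxy_X E K y x"
  shows "deg E x - card X = deg E y - card Y"
proof -
  define H where "H = remove_edges E (star_edges x X \<union> star_edges y Y)"
  obtain \<alpha> where aut: "graph_automorphism H \<alpha>" and "\<alpha> x = y"
    using symm unfolding symmetric_Kxy_def Let_def H_def X_def Y_def by blast
  then have "deg H y = deg H x"
    using automorphism_deg by metis
  have X: "X = nbhd E x - (K \<union> nbhd E y)" and Y: "Y = nbhd E y - (K \<union> nbhd E x)"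
    unfolding X_def Y_def Kxy_X_def by simp_all
  have irr: "\<not> E v v" for v
    using G unfolding simple_graph_def by blast
  have adj: "H u v \<longleftrightarrow> E u v \<and> \<not> (u = x \<and> v \<in> X) \<and> \<not> (v = x \<and> u \<in> X)
                 \<and> \<not> (u = y \<and> v \<in> Y) \<and> \<not> (v = y \<and> u \<in> Y)" for u v
    unfolding H_def remove_edges_def star_edges_def
    using xy X Y irr by (auto simp: doubleton_eq_iff nbhd_def)
  have "nbhd H x = nbhd E x - X" and "nbhd H y = nbhd E y - Y"
    unfolding nbhd_def using adj X Y xy by auto
  moreover have "X \<subseteq> nbhd E x" and "Y \<subseteq> nbhd E y"
    using X Y by auto
  ultimately show ?thesis
    using \<open>deg H y = deg H x\<close> unfolding deg_def by (simp add: card_Diff_subset)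
qed

lemma symmetric_Kxy_degvec:
  fixes E :: "'n::finite \<Rightarrow> 'n \<Rightarrow> bool"
  assumes G: "simple_graph E" and xy: "x \<noteq> y" "x \<in> K" "y \<in> K"
    and symm: "symmetric_Kxy E K x y"
  obtains z :: "real ^ 'n" and a :: real
  where "\<forall>i. 0 \<le> z $ i" and "z $ x \<le> z $ y" and "0 \<le> a"
    and "degvec E = z + a *\<^sub>R axis x 1"
    and "degvec (Kxy_op E K x y) = z + a *\<^sub>R axis y 1"
proof -
  define a where "a = card (Kxy_X E K x y)"
  define b where "b = card (Kxy_X E K y x)"
  define d where "d = deg E x - a"
  define z where "z = (\<chi> v. if v = x then real d else real (deg E v))"
  note deg' = Kxy_op_deg[OF G xy]
  have b_le: "b \<le> deg E y"
    using Kxy_op_deg(1)[OF G xy(1)[symmetric] xy(3,2)] unfolding b_def .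
  have Dx: "deg E x = d + a" and Dy: "deg E y = d + b"
    using deg'(1) symmetric_Kxy_deg[OF G xy symm] b_le unfolding a_def b_def d_def by auto
  show ?thesis
  proof
    show "\<forall>i. 0 \<le> z $ i" and "z $ x \<le> z $ y" and "0 \<le> real a"
      using xy Dy by (auto simp: z_def)
    show "degvec E = z + real a *\<^sub>R axis x 1"
      unfolding vec_eq_iff z_def degvec_def axis_def using Dx by auto
    show "degvec (Kxy_op E K x y) = z + real a *\<^sub>R axis y 1"
      unfolding vec_eq_iff z_def degvec_def axis_def
      using deg' Dx Dy xy unfolding a_def by auto
  qed
qed

theorem mainTheorem15:
  fixes E :: "'n::finite \<Rightarrow> 'n \<Rightarrow> bool" and K :: "'n set" and x y :: 'n
    and f :: "real ^ 'n \<Rightarrow> real"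
  assumes "simple_graph E"
    and "x \<noteq> y" and "x \<in> K" and "y \<in> K"
    and "symmetric_Kxy E K x y"
    and "symmetric_fun f" and "convex_sym f"
  shows "f (degvec E) \<le> f (degvec (Kxy_op E K x y)) \<and>
         (\<forall>s::nat. s > 0 \<longrightarrow>
           (\<Sum>v\<in>UNIV. real (deg E v) ^ s) \<le> (\<Sum>v\<in>UNIV. real (deg (Kxy_op E K x y) v) ^ s))"
proof -
  obtain z a where z: "\<forall>i. 0 \<le> z $ i" "z $ x \<le> z $ y" "0 \<le> a"
    and degs: "degvec E = z + a *\<^sub>R axis x 1" "degvec (Kxy_op E K x y) = z + a *\<^sub>R axis y 1"
    using symmetric_Kxy_degvec[OF assms(1-5)] .
  have transfer: "g (degvec E) \<le> g (degvec (Kxy_op E K x y))" if "convex_sym g" for g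
    using that[unfolded convex_sym_def, rule_format, of z y x a] z \<open>x \<noteq> y\<close>
    unfolding degs by simp
  have power_sum: "(\<Sum>v\<in>UNIV. real (deg G v) ^ s) = (\<Sum>i\<in>UNIV. (degvec G $ i) ^ s)"
    for G :: "'n \<Rightarrow> 'n \<Rightarrow> bool" and s :: nat
    by (simp add: degvec_def)
  show ?thesis
    unfolding power_sum
    using transfer[OF \<open>convex_sym f\<close>] transfer[OF convex_sym_power_sum] by blast
qed

end
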